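(* Let $k$ be a positive definite kernel on a set $\mathcal{X}$ and $k^\Delta$ the induced dueling kernel on $\mathcal{X}^2$. Let $\{(x_i,x'_i,y_i)\}_{i=1}^t$ be an observation set with $y_i\in\{0,1\}$, and let $h_t$ and $k^\Delta_t$ be the predictor and posterior covariance defined in the context. Let $\tilde h_t\sim\mathrm{GP}(h_t,v_t^2k^\Delta_t)$ be a Gaussian process sample on $\mathcal{X}^2$, where $v_t$ is a fixed (deterministic) sequence. Then there exists a function $\tilde f_t$ on $\mathcal{X}$ such that for all $(x,x')\in\mathcal{X}^2$, almost surely, $\tilde h_t(x,x')=\tilde f_t(x)-\tilde f_t(x')$.
   Context: The dueling kernel is $k^\Delta((x_1,x'_1),(x_2,x'_2))=k(x_1,x_2)+k(x'_1,x'_2)-k(x_1,x'_2)-k(x'_1,x_2)$, with RKHS $\mathcal{H}_{k^\Delta}$. With $\mu(u)=(1+e^{-u})^{-1}$ and $\lambda>0$, $h_t=\arg\min_{g\in\mathcal{H}_{k^\Delta}}\sum_{i=1}^t[-y_i\log\mu(g(x_i,x'_i))-(1-y_i)\log(1-\mu(g(x_i,x'_i)))]+\frac{\lambda}{2}\|g\|^2_{\mathcal{H}_{k^\Delta}}$. With $z_i=(x_i,x'_i)$, $k^\Delta_t(z)=[k^\Delta(z,z_j)]_{j=1}^t$, $K^\Delta_t=[k^\Delta(z_i,z_j)]_{i,j}$ and a constant $\kappa>0$, $k^\Delta_t(z,z')=k^\Delta(z,z')-k^\Delta_t(z)^\top(K^\Delta_t+\lambda\kappa I)^{-1}k^\Delta_t(z')$.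 *)

theory Defs
  imports "HOL-Probability.Probability" "Jordan_Normal_Form.Gauss_Jordan_Elimination"
begin

text \<open>Positive definite (= positive semidefinite, symmetric) kernel on a type.\<close>
definition pd_kernel :: "('b \<Rightarrow> 'b \<Rightarrow> real) \<Rightarrow> bool" where
  "pd_kernel K \<longleftrightarrow> (\<forall>x y. K x y = K y x) \<and>
     (\<forall>(n::nat) (a::nat \<Rightarrow> real) (z::nat \<Rightarrow> 'b).
        (\<Sum>i<n. \<Sum>j<n. a i * a j * K (z i) (z j)) \<ge> 0)"

definition dueling_kernel :: "('a \<Rightarrow> 'a \<Rightarrow> real) \<Rightarrow> ('a \<times> 'a) \<Rightarrow> ('a \<times> 'a) \<Rightarrow> real" where
  "dueling_kernel k z1 z2 =
     k (fst z1) (fst z2) + k (snd z1) (snd z2) - k (fst z1) (snd z2) - k (snd z1) (fst z2)"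

text \<open>A finite linear combination of kernel sections, as a list of (coefficient, centre).\<close>
definition pre_eval :: "('b \<Rightarrow> 'b \<Rightarrow> real) \<Rightarrow> (real \<times> 'b) list \<Rightarrow> 'b \<Rightarrow> real" where
  "pre_eval K F z = (\<Sum>(a,p)\<leftarrow>F. a * K p z)"

definition pre_norm2 :: "('b \<Rightarrow> 'b \<Rightarrow> real) \<Rightarrow> (real \<times> 'b) list \<Rightarrow> real" where
  "pre_norm2 K F = (\<Sum>(a,p)\<leftarrow>F. \<Sum>(b,q)\<leftarrow>F. a * b * K p q)"

definition pre_diff :: "(real \<times> 'b) list \<Rightarrow> (real \<times> 'b) list \<Rightarrow> (real \<times> 'b) list" where
  "pre_diff F G = F @ map (\<lambda>(a,p). (- a, p)) G"

definition rkhs_approx :: "('b \<Rightarrow> 'b \<Rightarrow> real) \<Rightarrow> (nat \<Rightarrow> (real \<times> 'b) list) \<Rightarrow> ('b \<Rightarrow> real) \<Rightarrow> bool" where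
  "rkhs_approx K F g \<longleftrightarrow>
     (\<forall>e>0. \<exists>N. \<forall>m\<ge>N. \<forall>n\<ge>N. pre_norm2 K (pre_diff (F m) (F n)) < e) \<and>
     (\<forall>z. (\<lambda>n. pre_eval K (F n) z) \<longlonglongrightarrow> g z)"

definition rkhs :: "('b \<Rightarrow> 'b \<Rightarrow> real) \<Rightarrow> ('b \<Rightarrow> real) set" where
  "rkhs K = {g. \<exists>F. rkhs_approx K F g}"

text \<open>Squared RKHS norm: limit of the pre-Hilbert norms of an approximating sequence
  (independent of the chosen sequence for a positive definite kernel).\<close>
definition rkhs_norm2 :: "('b \<Rightarrow> 'b \<Rightarrow> real) \<Rightarrow> ('b \<Rightarrow> real) \<Rightarrow> real" where
  "rkhs_norm2 K g = Inf {L. \<exists>F. rkhs_approx K F g \<and> (\<lambda>n. pre_norm2 K (F n)) \<longlonglongrightarrow> L}"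

definition sigmoid :: "real \<Rightarrow> real" where
  "sigmoid u = 1 / (1 + exp (- u))"

definition dueling_objective ::
  "('a \<Rightarrow> 'a \<Rightarrow> real) \<Rightarrow> real \<Rightarrow> nat \<Rightarrow> (nat \<Rightarrow> 'a \<times> 'a) \<Rightarrow> (nat \<Rightarrow> real)
     \<Rightarrow> ('a \<times> 'a \<Rightarrow> real) \<Rightarrow> real" where
  "dueling_objective k lam t zs ys g =
     (\<Sum>i<t. - ys i * ln (sigmoid (g (zs i))) - (1 - ys i) * ln (1 - sigmoid (g (zs i))))
     + lam / 2 * rkhs_norm2 (dueling_kernel k) g"

text \<open>Observations are indexed \<open>0..<t\<close>.\<close>
definition gram_reg :: "('a \<Rightarrow> 'a \<Rightarrow> real) \<Rightarrow> real \<Rightarrow> real \<Rightarrow> nat \<Rightarrow> (nat \<Rightarrow> 'a \<times> 'a) \<Rightarrow> real mat" where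
  "gram_reg k lam kap t zs =
     mat t t (\<lambda>(i,j). dueling_kernel k (zs i) (zs j)) + (lam * kap) \<cdot>\<^sub>m 1\<^sub>m t"

definition post_cov ::
  "('a \<Rightarrow> 'a \<Rightarrow> real) \<Rightarrow> real \<Rightarrow> real \<Rightarrow> nat \<Rightarrow> (nat \<Rightarrow> 'a \<times> 'a)
     \<Rightarrow> 'a \<times> 'a \<Rightarrow> 'a \<times> 'a \<Rightarrow> real" where
  "post_cov k lam kap t zs z z' =
     (let A = the (mat_inverse (gram_reg k lam kap t zs)) in
      dueling_kernel k z z'
      - (\<Sum>i<t. \<Sum>j<t. dueling_kernel k z (zs i) * A $$ (i,j) * dueling_kernel k (zs j) z'))"

definition normal_rv :: "'w measure \<Rightarrow> ('w \<Rightarrow> real) \<Rightarrow> real \<Rightarrow> real \<Rightarrow> bool" where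
  "normal_rv M X \<mu> s2 \<longleftrightarrow> X \<in> borel_measurable M \<and>
     (if s2 = 0 then (AE \<omega> in M. X \<omega> = \<mu>)
      else s2 > 0 \<and> distributed M lborel X (normal_density \<mu> (sqrt s2)))"

text \<open>\<open>H\<close> is a Gaussian process with mean \<open>m\<close> and covariance \<open>C\<close>: all finite-dimensional
  marginals are jointly Gaussian, i.e. every finite linear combination is normal with the
  corresponding mean and variance.\<close>
definition gaussian_process ::
  "'w measure \<Rightarrow> ('w \<Rightarrow> 'b \<Rightarrow> real) \<Rightarrow> ('b \<Rightarrow> real) \<Rightarrow> ('b \<Rightarrow> 'b \<Rightarrow> real) \<Rightarrow> bool" where
  "gaussian_process M H m C \<longleftrightarrow>
     (\<forall>(n::nat) (c::nat \<Rightarrow> real) (p::nat \<Rightarrow> 'b).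
        normal_rv M (\<lambda>\<omega>. \<Sum>i<n. c i * H \<omega> (p i))
          (\<Sum>i<n. c i * m (p i))
          (\<Sum>i<n. \<Sum>j<n. c i * c j * C (p i) (p j)))"

end

theory Submission
  imports Defs
begin

text \<open>Every kernel section of the dueling kernel is of the form \<open>(x, x') \<mapsto> f x - f x'\<close>,
  and this shape survives finite linear combinations and pointwise limits. Hence the
  posterior mean \<open>h\<^sub>t\<close> (an RKHS element, whatever objective it minimises) and every section
  of the posterior covariance have it. For a Gaussian process whose mean and covariance
  sections have this shape, the combination \<open>H(x, x') - H(x, x\<^sub>0) + H(x', x\<^sub>0)\<close> has
  mean and variance zero, so it vanishes almost surely, and \<open>f\<^sub>t(x) = H(x, x\<^sub>0)\<close> works.\<close>

definition difference_function :: "('a \<times> 'a \<Rightarrow> real) \<Rightarrow> bool" where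
  "difference_function g \<longleftrightarrow> (\<exists>f. \<forall>x x'. g (x, x') = f x - f x')"

lemma difference_function_iff:
  "difference_function g \<longleftrightarrow> (\<forall>x x' x0. g (x, x') = g (x, x0) - g (x', x0))"
proof
  assume "difference_function g"
  then show "\<forall>x x' x0. g (x, x') = g (x, x0) - g (x', x0)"
    unfolding difference_function_def by auto
next
  assume "\<forall>x x' x0. g (x, x') = g (x, x0) - g (x', x0)"
  then show "difference_function g"
    unfolding difference_function_def by (intro exI[of _ "\<lambda>x. g (x, undefined)"]) blast
qed

lemma difference_functionD:
  "difference_function g \<Longrightarrow> g (x, x') = g (x, x0) - g (x', x0)"
  by (simp add: difference_function_iff)

lemma difference_function_zero [simp]: "difference_function (\<lambda>_. 0)"
  unfolding difference_function_def by (intro exI[of _ "\<lambda>_. 0"]) simp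

lemma difference_function_add:
  assumes "difference_function f" "difference_function g"
  shows "difference_function (\<lambda>z. f z + g z)"
proof -
  obtain ff fg where "\<And>x x'. f (x, x') = ff x - ff x'" "\<And>x x'. g (x, x') = fg x - fg x'"
    using assms unfolding difference_function_def by blast
  then show ?thesis
    unfolding difference_function_def by (intro exI[of _ "\<lambda>x. ff x + fg x"]) simp
qed

lemma difference_function_uminus:
  assumes "difference_function g"
  shows "difference_function (\<lambda>z. - g z)"
proof -
  obtain fg where "\<And>x x'. g (x, x') = fg x - fg x'"
    using assms unfolding difference_function_def by blast
  then show ?thesis
    unfolding difference_function_def by (intro exI[of _ "\<lambda>x. - fg x"]) simp
qed

lemma difference_function_diff:
  assumes "difference_function f" "difference_function g"
  shows "difference_function (\<lambda>z. f z - g z)"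
  using difference_function_add[OF assms(1) difference_function_uminus[OF assms(2)]] by simp

lemma difference_function_scaleL:
  assumes "difference_function g"
  shows "difference_function (\<lambda>z. c * g z)"
proof -
  obtain fg where "\<And>x x'. g (x, x') = fg x - fg x'"
    using assms unfolding difference_function_def by blast
  then show ?thesis
    unfolding difference_function_def
    by (intro exI[of _ "\<lambda>x. c * fg x"]) (simp add: right_diff_distrib)
qed

lemma difference_function_scaleR:
  assumes "difference_function g"
  shows "difference_function (\<lambda>z. g z * c)"
  using difference_function_scaleL[OF assms, of c] by (simp add: mult.commute)

lemma difference_function_sum:
  assumes "\<And>i. i \<in> I \<Longrightarrow> difference_function (g i)"
  shows "difference_function (\<lambda>z. \<Sum>i\<in>I. g i z)"
  using assms
  by (induction I rule: infinite_finite_induct) (auto intro: difference_function_add)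

lemma difference_function_limit:
  assumes "\<And>n. difference_function (g n)" and "\<And>z. (\<lambda>n. g n z) \<longlonglongrightarrow> l z"
  shows "difference_function l"
  unfolding difference_function_iff
proof (intro allI)
  fix x x' x0
  have "(\<lambda>n. g n (x, x0) - g n (x', x0)) \<longlonglongrightarrow> l (x, x0) - l (x', x0)"
    using assms(2) by (intro tendsto_diff)
  moreover have "(\<lambda>n. g n (x, x0) - g n (x', x0)) = (\<lambda>n. g n (x, x'))"
    using assms(1) by (simp add: difference_functionD[symmetric])
  ultimately show "l (x, x') = l (x, x0) - l (x', x0)"
    using assms(2) LIMSEQ_unique by metis
qed

lemma difference_function_dueling_kernel_left:
  "difference_function (\<lambda>z. dueling_kernel k z w)"
  unfolding difference_function_def dueling_kernel_def
  by (intro exI[of _ "\<lambda>x. k x (fst w) - k x (snd w)"]) simp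

lemma difference_function_dueling_kernel_right:
  "difference_function (dueling_kernel k w)"
  unfolding difference_function_def dueling_kernel_def
  by (intro exI[of _ "\<lambda>x. k (fst w) x - k (snd w) x"]) simp

lemma difference_function_pre_eval:
  assumes "\<And>p. difference_function (K p)"
  shows "difference_function (pre_eval K F)"
  unfolding pre_eval_def
proof (induction F)
  case (Cons aq F)
  with assms show ?case
    by (cases aq) (simp add: difference_function_add difference_function_scaleL)
qed simp

lemma difference_function_rkhs:
  assumes "\<And>p. difference_function (K p)" and "g \<in> rkhs K"
  shows "difference_function g"
proof -
  obtain F where "rkhs_approx K F g"
    using assms(2) unfolding rkhs_def by blast
  then have "\<And>z. (\<lambda>n. pre_eval K (F n) z) \<longlonglongrightarrow> g z"
    unfolding rkhs_approx_def by blast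
  then show ?thesis
    by (rule difference_function_limit[OF difference_function_pre_eval[OF assms(1)]])
qed

lemma difference_function_post_cov:
  "difference_function (\<lambda>z. post_cov k lam kap t zs z w)"
  unfolding post_cov_def Let_def
  by (intro difference_function_diff difference_function_sum difference_function_scaleR
      difference_function_dueling_kernel_left)

lemma gaussian_process_measurable:
  assumes "gaussian_process M H m C"
  shows "(\<lambda>\<omega>. H \<omega> z) \<in> borel_measurable M"
  using assms[unfolded gaussian_process_def, rule_format, where n = 1 and c = "\<lambda>_. 1"
      and p = "\<lambda>_. z"]
  by (simp add: normal_rv_def)

lemma gaussian_process_AE_lincomb_eq_0:
  fixes n :: nat
  assumes "gaussian_process M H m C"
    and "(\<Sum>i<n. c i * m (p i)) = 0"
    and "\<And>w. (\<Sum>i<n. c i * C (p i) w) = 0"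
  shows "AE \<omega> in M. (\<Sum>i<n. c i * H \<omega> (p i)) = 0"
proof -
  have "(\<Sum>i<n. \<Sum>j<n. c i * c j * C (p i) (p j)) = (\<Sum>j<n. c j * (\<Sum>i<n. c i * C (p i) (p j)))"
    by (subst sum.swap) (simp add: sum_distrib_left algebra_simps)
  also have "\<dots> = 0"
    using assms(3) by simp
  finally have variance: "(\<Sum>i<n. \<Sum>j<n. c i * c j * C (p i) (p j)) = 0" .
  have "normal_rv M (\<lambda>\<omega>. \<Sum>i<n. c i * H \<omega> (p i)) (\<Sum>i<n. c i * m (p i))
      (\<Sum>i<n. \<Sum>j<n. c i * c j * C (p i) (p j))"
    using assms(1) unfolding gaussian_process_def by blast
  then show ?thesis
    unfolding variance assms(2) normal_rv_def by simp
qed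

lemma gaussian_process_AE_difference:
  assumes "gaussian_process M H m C"
    and "difference_function m"
    and "\<And>w. difference_function (\<lambda>z. C z w)"
  shows "AE \<omega> in M. H \<omega> (x, x') = H \<omega> (x, x0) - H \<omega> (x', x0)"
proof -
  define c :: "nat \<Rightarrow> real" where "c = (\<lambda>i. if i = 1 then -1 else 1)"
  define p where "p = (\<lambda>i::nat. if i = 0 then (x, x') else if i = 1 then (x, x0) else (x', x0))"
  have sum3: "(\<Sum>i<3. c i * g (p i)) = g (x, x') - g (x, x0) + g (x', x0)" for g
    by (simp add: numeral_3_eq_3 c_def p_def)
  have "AE \<omega> in M. (\<Sum>i<3. c i * H \<omega> (p i)) = 0"
  proof (rule gaussian_process_AE_lincomb_eq_0[OF assms(1)])
    show "(\<Sum>i<3. c i * m (p i)) = 0"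
      using difference_functionD[OF assms(2), of x x' x0] sum3[of m] by linarith
    show "(\<Sum>i<3. c i * C (p i) w) = 0" for w
      using difference_functionD[OF assms(3)[of w], of x x' x0] sum3[of "\<lambda>z. C z w"]
      by linarith
  qed
  then show ?thesis
  proof eventually_elim
    case (elim \<omega>)
    with sum3[of "H \<omega>"] show ?case by linarith
  qed
qed

theorem proposition1:
  fixes k :: "'a \<Rightarrow> 'a \<Rightarrow> real"
    and t :: nat and xs xs' :: "nat \<Rightarrow> 'a" and ys :: "nat \<Rightarrow> real"
    and lam kap v :: real
    and h :: "'a \<times> 'a \<Rightarrow> real"
    and M :: "'w measure" and htil :: "'w \<Rightarrow> 'a \<times> 'a \<Rightarrow> real"
  assumes "pd_kernel k"
    and "\<forall>i<t. ys i \<in> {0, 1}"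
    and "lam > 0" and "kap > 0"
    and "h \<in> rkhs (dueling_kernel k)"
    and "\<forall>g\<in>rkhs (dueling_kernel k).
           dueling_objective k lam t (\<lambda>i. (xs i, xs' i)) ys h
           \<le> dueling_objective k lam t (\<lambda>i. (xs i, xs' i)) ys g"
    and "prob_space M"
    and "gaussian_process M htil h
           (\<lambda>z z'. v\<^sup>2 * post_cov k lam kap t (\<lambda>i. (xs i, xs' i)) z z')"
  shows "\<exists>ftil :: 'w \<Rightarrow> 'a \<Rightarrow> real.
           (\<forall>x. (\<lambda>\<omega>. ftil \<omega> x) \<in> borel_measurable M) \<and>
           (\<forall>x x'. AE \<omega> in M. htil \<omega> (x, x') = ftil \<omega> x - ftil \<omega> x')"
proof -
  note GP = assms(8)
  have mean: "difference_function h"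
    using difference_function_rkhs[OF difference_function_dueling_kernel_right assms(5)] .
  have cov: "difference_function (\<lambda>z. v\<^sup>2 * post_cov k lam kap t (\<lambda>i. (xs i, xs' i)) z w)" for w
    by (intro difference_function_scaleL difference_function_post_cov)
  show ?thesis
  proof (intro exI[of _ "\<lambda>\<omega> x. htil \<omega> (x, undefined)"] conjI allI)
    show "(\<lambda>\<omega>. htil \<omega> (x, undefined)) \<in> borel_measurable M" for x
      using gaussian_process_measurable[OF GP] .
    show "AE \<omega> in M. htil \<omega> (x, x') = htil \<omega> (x, undefined) - htil \<omega> (x', undefined)" for x x'
      using gaussian_process_AE_difference[OF GP mean cov] .
  qed
qed

end
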